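(* Let $f:\mathbb{R}\to[0,\infty)$ be a bounded probability density such that $\int_\mathbb{R}|x|^\epsilon f(x)\,\mathrm{d}x<\infty$ for some $\epsilon>0$. If $h\in L^\infty(\mathbb{R})\cap L^q(\mathbb{R})$ for some $q\in(1,\infty)$, then $\Phi_n(h)\in L^p(\mathbb{R})$ for every $p\in((1-\epsilon)q,\infty)\cap[1,\infty)$ and every $n\in\mathbb{N}$.
   Context: $f_1:=f$, $f_{k+1}:=f_k*f$, i.e. $f_{k+1}(x)=\int_\mathbb{R} f_k(x-y)f(y)\,\mathrm{d}y$. For $n\in\mathbb{N}$ and $h\in L^\infty(\mathbb{R})$, the function $\Phi_n(h)$ is defined by $\Phi_n(h)(x):=2\int_{\{z:\,|z|>(|x|-3)/2\}}f_n(z)\,h(x-z)\,\mathrm{d}z$ for $x\in\mathbb{R}$. *)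

theory Defs
  imports "HOL-Analysis.Analysis"
begin

definition conv :: "(real \<Rightarrow> real) \<Rightarrow> (real \<Rightarrow> real) \<Rightarrow> real \<Rightarrow> real" where
  "conv g f x = (LINT y|lborel. g (x - y) * f y)"

text \<open>fconv f k is the k-fold convolution power f_k (for k \<ge> 1); fconv f 0 is set to f as well (unused).\<close>
fun fconv :: "(real \<Rightarrow> real) \<Rightarrow> nat \<Rightarrow> real \<Rightarrow> real" where
  "fconv f 0 = f"
| "fconv f (Suc 0) = f"
| "fconv f (Suc (Suc k)) = conv (fconv f (Suc k)) f"

definition Phi :: "(real \<Rightarrow> real) \<Rightarrow> nat \<Rightarrow> (real \<Rightarrow> real) \<Rightarrow> real \<Rightarrow> real" where
  "Phi f n h x = 2 * (LINT z|lborel. indicator {z. \<bar>z\<bar> > (\<bar>x\<bar> - 3) / 2} z * (fconv f n z * h (x - z)))"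

end

theory Submission
  imports Defs
begin

(* Write g = f_n, v(x) = 1 + |x|, and Phi_n(h) = tail_op g h, where the cut region of the integral
   is { z. |z| > (|x| - 3)/2 }.  The proof has four steps.
   (1) v^s is submultiplicative, so weighted L^1 norms are submultiplicative under convolution;
       by induction every convolution power f_n has a finite eps-moment (fconv_moment).
   (2) On the cut region v(x) \<le> 4 v(z).  Hence the tail mass T(x) = int_cut g decays like v(x)^-eps,
       and the tail energy E_r(x) = int_cut g(z) |h(x-z)|^r dz satisfies
       int v^s E_r \<le> 4^s (eps-moment of g) ||h||_r^r for 0 \<le> s \<le> eps (Tonelli).
   (3) Hoelder's inequality for the finite measure g dz on the cut region gives
       |Phi|^r \<le> 2^r T^(r-1) E_r \<le> C v^(-eps (r-1)) E_r  (tail_op_pointwise).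
   (4) If p \<ge> q, take r = p and use h \<in> L^p.  If p < q, take r = q and interpolate,
       |Phi|^p \<le> |Phi|^q v^(eps q) + v^(-gamma) with gamma = eps q p/(q - p); gamma > 1 is exactly
       the condition p > (1 - eps) q, so both terms are integrable. *)

abbreviation weight :: "real \<Rightarrow> real \<Rightarrow> real" where
  "weight s x \<equiv> (1 + \<bar>x\<bar>) powr s"

abbreviation moment :: "real \<Rightarrow> (real \<Rightarrow> real) \<Rightarrow> ennreal" where
  "moment s g \<equiv> \<integral>\<^sup>+x. ennreal (g x * weight s x) \<partial>lborel"

lemma ennreal_abs_integral_le:
  fixes F :: "'a \<Rightarrow> real"
  shows "ennreal \<bar>integral\<^sup>L M F\<bar> \<le> (\<integral>\<^sup>+x. ennreal \<bar>F x\<bar> \<partial>M)"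
  using integral_norm_bound_ennreal[of M F]
  by (cases "integrable M F") (auto simp: not_integrable_integral_eq)

lemma nn_integral_translate:
  fixes F :: "real \<Rightarrow> ennreal"
  assumes [measurable]: "F \<in> borel_measurable borel"
  shows "(\<integral>\<^sup>+x. F (x - y) \<partial>lborel) = (\<integral>\<^sup>+x. F x \<partial>lborel)"
  using nn_integral_real_affine[of F 1 "-y"] by (simp add: one_ennreal_def[symmetric])

lemma weight_zero: "weight 0 x = 1"
  using abs_ge_zero[of x] by simp

lemma weight_add: "weight a x * weight b x = weight (a + b) x"
  by (simp add: powr_add)

lemma weight_le_one:
  assumes "s \<le> 0"
  shows "weight s x \<le> 1"
  using powr_mono[OF assms, of "1 + \<bar>x\<bar>"] abs_ge_zero[of x] by (auto split: if_splits)

text \<open>Submultiplicativity of the weight, from \<open>1 + |x| \<le> (1 + |x - y|)(1 + |y|)\<close>.\<close>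
lemma weight_submult:
  assumes "s \<ge> 0"
  shows "weight s x \<le> weight s (x - y) * weight s y"
proof -
  have "(1 + \<bar>x - y\<bar>) * (1 + \<bar>y\<bar>) = 1 + \<bar>x - y\<bar> + \<bar>y\<bar> + \<bar>x - y\<bar> * \<bar>y\<bar>"
    by (simp add: algebra_simps)
  then have "1 + \<bar>x\<bar> \<le> (1 + \<bar>x - y\<bar>) * (1 + \<bar>y\<bar>)"
    using abs_triangle_ineq[of "x - y" y] zero_le_mult_iff[of "\<bar>x - y\<bar>" "\<bar>y\<bar>"] by linarith
  then have "weight s x \<le> ((1 + \<bar>x - y\<bar>) * (1 + \<bar>y\<bar>)) powr s"
    by (intro powr_mono2) (use assms in auto)
  then show ?thesis by (simp add: powr_mult)
qed

lemma weight_le_abs_powr: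
  assumes "s \<ge> 0"
  shows "weight s x \<le> 2 powr s * (1 + \<bar>x\<bar> powr s)"
proof -
  have "weight s x \<le> (2 * max 1 \<bar>x\<bar>) powr s"
    using assms by (intro powr_mono2) auto
  also have "\<dots> = 2 powr s * max 1 \<bar>x\<bar> powr s"
    by (simp add: powr_mult)
  also have "max 1 \<bar>x\<bar> powr s \<le> 1 + \<bar>x\<bar> powr s"
    by (cases "\<bar>x\<bar> \<le> 1") (auto simp: max_def)
  finally show ?thesis by simp
qed

lemma weight_integrable:
  assumes g: "\<gamma> > 1"
  shows "(\<integral>\<^sup>+x. ennreal (weight (-\<gamma>) x) \<partial>lborel) < \<infinity>"
proof -
  define F where "F = (\<lambda>t::real. ennreal (t powr (-\<gamma>)) * indicator {1..} t)"
  have [measurable]: "F \<in> borel_measurable borel"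
    unfolding F_def by measurable
  have IF: "(\<integral>\<^sup>+t. F t \<partial>lborel) = ennreal (-(1 powr (-\<gamma>+1)) / (-\<gamma>+1))"
    unfolding F_def using g
    by (intro nn_integral_has_integral_lebesgue' has_integral_powr_to_inf) auto
  have "(\<integral>\<^sup>+x. ennreal (weight (-\<gamma>) x) \<partial>lborel) \<le> (\<integral>\<^sup>+x. F (x - (-1)) + F (1 + (-1) * x) \<partial>lborel)"
  proof (rule nn_integral_mono)
    fix x :: real
    show "ennreal (weight (-\<gamma>) x) \<le> F (x - (-1)) + F (1 + (-1) * x)"
    proof (cases "x \<ge> 0")
      case True
      then have "F (x - (-1)) = ennreal (weight (-\<gamma>) x)"
        by (simp add: F_def add.commute)
      then show ?thesis by (simp add: add_increasing2)
    next
      case False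
      then have "F (1 + (-1) * x) = ennreal (weight (-\<gamma>) x)"
        by (simp add: F_def)
      then show ?thesis by (simp add: add_increasing)
    qed
  qed
  also have "\<dots> = (\<integral>\<^sup>+x. F (x - (-1)) \<partial>lborel) + (\<integral>\<^sup>+x. F (1 + (-1) * x) \<partial>lborel)"
    by (rule nn_integral_add) auto
  also have "\<dots> = 2 * (\<integral>\<^sup>+t. F t \<partial>lborel)"
    using nn_integral_real_affine[of F "-1" 1] nn_integral_translate[of F "-1"] by (simp add: mult_2)
  also have "\<dots> < \<infinity>"
    using IF by (simp add: ennreal_mult_less_top)
  finally show ?thesis .
qed

lemma moment_finite:
  fixes f :: "real \<Rightarrow> real"
  assumes [measurable]: "f \<in> borel_measurable borel" and fn: "\<And>x. f x \<ge> 0" and s: "s \<ge> 0"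
    and "integrable lborel f" "integrable lborel (\<lambda>x. \<bar>x\<bar> powr s * f x)"
  shows "moment s f < \<infinity>"
proof -
  have "integrable lborel (\<lambda>x. f x * weight s x)"
  proof (rule Bochner_Integration.integrable_bound)
    show "integrable lborel (\<lambda>x. 2 powr s * (f x + \<bar>x\<bar> powr s * f x))"
      using assms by auto
    show "AE x in lborel. norm (f x * weight s x) \<le> norm (2 powr s * (f x + \<bar>x\<bar> powr s * f x))"
      using mult_left_mono[OF weight_le_abs_powr[OF s] fn] by (simp add: fn algebra_simps)
  qed simp
  then show ?thesis
    by (simp add: integrable_iff_bounded fn)
qed

lemma conv_nonneg:
  assumes "\<And>x. G x \<ge> 0" "\<And>x. f x \<ge> 0"
  shows "conv G f x \<ge> 0"
  unfolding conv_def by (intro Bochner_Integration.integral_nonneg mult_nonneg_nonneg assms)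

lemma conv_weighted_le:
  assumes [measurable]: "G \<in> borel_measurable borel" "f \<in> borel_measurable borel"
    and Gn: "\<And>x. G x \<ge> 0" and fn: "\<And>x. f x \<ge> 0" and w: "w \<ge> 0"
  shows "ennreal (conv G f x * w) \<le> (\<integral>\<^sup>+y. ennreal (G (x - y) * f y * w) \<partial>lborel)"
proof -
  have "ennreal (conv G f x) \<le> (\<integral>\<^sup>+y. ennreal (G (x - y) * f y) \<partial>lborel)"
    unfolding conv_def using ennreal_abs_integral_le[of lborel "\<lambda>y. G (x - y) * f y"]
    by (simp add: Gn fn)
  then have "ennreal (conv G f x) * ennreal w \<le> (\<integral>\<^sup>+y. ennreal (G (x - y) * f y) \<partial>lborel) * ennreal w"
    by (rule mult_right_mono) simp
  also have "\<dots> = (\<integral>\<^sup>+y. ennreal (G (x - y) * f y) * ennreal w \<partial>lborel)"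
    by (rule nn_integral_multc[symmetric]) simp
  finally show ?thesis
    using w conv_nonneg[of G f x] by (simp add: ennreal_mult'[symmetric] Gn fn)
qed

text \<open>Weighted \<open>L\<^sup>1\<close> norms with the submultiplicative weight \<open>(1 + |x|)\<^sup>s\<close> are
  submultiplicative under convolution (Tonelli plus translation invariance).\<close>
lemma conv_moment:
  fixes G f :: "real \<Rightarrow> real"
  assumes [measurable]: "G \<in> borel_measurable borel" "f \<in> borel_measurable borel"
    and Gn: "\<And>x. G x \<ge> 0" and fn: "\<And>x. f x \<ge> 0" and s: "s \<ge> 0"
  shows "moment s (conv G f) \<le> moment s G * moment s f"
proof -
  have "moment s (conv G f) \<le> (\<integral>\<^sup>+x. (\<integral>\<^sup>+y. ennreal (G (x - y) * f y * weight s x) \<partial>lborel) \<partial>lborel)"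
    by (intro nn_integral_mono conv_weighted_le Gn fn) simp_all
  also have "\<dots> = (\<integral>\<^sup>+y. (\<integral>\<^sup>+x. ennreal (G (x - y) * f y * weight s x) \<partial>lborel) \<partial>lborel)"
    by (rule lborel_pair.Fubini'[symmetric]) measurable
  also have "\<dots> \<le> (\<integral>\<^sup>+y. (\<integral>\<^sup>+x. ennreal (G (x - y) * weight s (x - y)) * ennreal (f y * weight s y) \<partial>lborel) \<partial>lborel)"
  proof (intro nn_integral_mono)
    fix x y
    have "G (x - y) * f y * weight s x \<le> G (x - y) * f y * (weight s (x - y) * weight s y)"
      by (intro mult_left_mono weight_submult s mult_nonneg_nonneg Gn fn)
    then show "ennreal (G (x - y) * f y * weight s x)
        \<le> ennreal (G (x - y) * weight s (x - y)) * ennreal (f y * weight s y)"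
      by (simp add: ennreal_mult'[symmetric] Gn fn ennreal_leI mult_ac)
  qed
  also have "\<dots> = (\<integral>\<^sup>+y. moment s G * ennreal (f y * weight s y) \<partial>lborel)"
    by (simp add: nn_integral_multc nn_integral_translate[where F="\<lambda>x. ennreal (G x * weight s x)"])
  also have "\<dots> = moment s G * moment s f"
    by (rule nn_integral_cmult) simp
  finally show ?thesis .
qed

lemma fconv_moment:
  fixes f :: "real \<Rightarrow> real"
  assumes [measurable]: "f \<in> borel_measurable borel" and fn: "\<And>x. f x \<ge> 0"
    and s: "s \<ge> 0" and fm: "moment s f < \<infinity>"
  shows "fconv f n \<in> borel_measurable borel \<and> (\<forall>x. fconv f n x \<ge> 0) \<and> moment s (fconv f n) < \<infinity>"
proof (induction n)
  case (Suc n)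
  show ?case
  proof (cases n)
    case (Suc k)
    let ?G = "fconv f (Suc k)"
    have [measurable]: "?G \<in> borel_measurable borel" and Gn: "\<And>x. ?G x \<ge> 0"
      and "moment s ?G < \<infinity>"
      using "Suc.IH" Suc by auto
    then have "moment s ?G * moment s f < \<infinity>"
      using fm by (simp add: ennreal_mult_less_top)
    then have "moment s (conv ?G f) < \<infinity>"
      using conv_moment[of ?G f s] Gn fn s by (auto intro: le_less_trans)
    moreover have "conv ?G f \<in> borel_measurable borel"
      unfolding conv_def by measurable
    ultimately show ?thesis
      using conv_nonneg[of ?G f] Gn fn Suc by simp
  qed (use assms in simp)
qed (use assms in simp)

lemma young_linearised:
  fixes H c r :: real
  assumes r: "r > 1" and c: "c > 0" and H: "H \<ge> 0"
  shows "H \<le> (1/r) * c powr (1 - r) * H powr r + (1 - 1/r) * c"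
proof (cases "H = 0")
  case False
  then have Hp: "H > 0" using H by simp
  have "(H powr r * c powr (1 - r)) powr (1/r) * c powr (1 - 1/r)
      \<le> (1/r) * (H powr r * c powr (1 - r)) + (1 - 1/r) * c"
    by (rule Youngs_inequality_0) (use r c Hp in auto)
  moreover have "(H powr r * c powr (1 - r)) powr (1/r) * c powr (1 - 1/r) = H"
    using r c Hp by (simp add: powr_mult powr_powr powr_add[symmetric] field_simps)
  ultimately show ?thesis by (simp add: algebra_simps)
qed (use r c in simp)

lemma nn_integral_young_bound:
  fixes w H :: "'a \<Rightarrow> real"
  assumes [measurable]: "w \<in> borel_measurable M" "H \<in> borel_measurable M"
    and wn: "\<And>x. w x \<ge> 0" and Hn: "\<And>x. H x \<ge> 0" and r: "r > 1" and c: "c > 0"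
    and T: "(\<integral>\<^sup>+x. ennreal (w x) \<partial>M) = ennreal T" "T \<ge> 0"
    and K: "(\<integral>\<^sup>+x. ennreal (w x * H x powr r) \<partial>M) = ennreal K" "K \<ge> 0"
  shows "(\<integral>\<^sup>+x. ennreal (w x * H x) \<partial>M) \<le> ennreal ((1/r) * c powr (1 - r) * K + (1 - 1/r) * c * T)"
proof -
  let ?a = "(1/r) * c powr (1 - r)" and ?b = "(1 - 1/r) * c"
  have ab: "?a \<ge> 0" "?b \<ge> 0" using r c by auto
  have "(\<integral>\<^sup>+x. ennreal (w x * H x) \<partial>M)
      \<le> (\<integral>\<^sup>+x. ennreal ?a * ennreal (w x * H x powr r) + ennreal ?b * ennreal (w x) \<partial>M)"
  proof (rule nn_integral_mono)
    fix x
    have "w x * H x \<le> w x * (?a * H x powr r + ?b)"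
      by (intro mult_left_mono young_linearised r c Hn wn)
    then have "ennreal (w x * H x) \<le> ennreal (?a * (w x * H x powr r) + ?b * w x)"
      by (intro ennreal_leI) (simp add: algebra_simps)
    also have "\<dots> = ennreal (?a * (w x * H x powr r)) + ennreal (?b * w x)"
      by (intro ennreal_plus mult_nonneg_nonneg ab wn) simp
    also have "\<dots> = ennreal ?a * ennreal (w x * H x powr r) + ennreal ?b * ennreal (w x)"
      by (simp only: ennreal_mult'[OF ab(1)] ennreal_mult'[OF ab(2)])
    finally show "ennreal (w x * H x) \<le> ennreal ?a * ennreal (w x * H x powr r) + ennreal ?b * ennreal (w x)" .
  qed
  also have "\<dots> = ennreal ?a * ennreal K + ennreal ?b * ennreal T"
    by (subst nn_integral_add) (auto simp: nn_integral_cmult K T)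
  also have "\<dots> = ennreal (?a * K) + ennreal (?b * T)"
    by (simp only: ennreal_mult'[OF ab(1)] ennreal_mult'[OF ab(2)])
  also have "\<dots> = ennreal (?a * K + ?b * T)"
    by (rule ennreal_plus[symmetric]) (intro mult_nonneg_nonneg ab T(2) K(2))+
  finally show ?thesis by (simp add: mult.assoc)
qed

text \<open>The optimal scale \<open>c = (K/T)\<^sup>1\<^sup>/\<^sup>r\<close> turns the linearised bound into \<open>T\<^sup>1\<^sup>-\<^sup>1\<^sup>/\<^sup>r K\<^sup>1\<^sup>/\<^sup>r\<close>.\<close>
lemma young_optimal_scale:
  fixes T K r :: real
  assumes T: "T > 0" and K: "K > 0" and r: "r > 1"
  shows "(1/r) * ((K / T) powr (1/r)) powr (1 - r) * K + (1 - 1/r) * (K / T) powr (1/r) * T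
    = T powr (1 - 1/r) * K powr (1/r)"
proof -
  let ?c = "(K / T) powr (1/r)" and ?X = "T powr (1 - 1/r) * K powr (1/r)"
  have "?c powr (1 - r) * K = exp ((1 - r) * (1/r * (ln K - ln T)) + ln K)"
    using T K by (simp add: powr_def exp_add ln_div)
  also have "\<dots> = exp ((1 - 1/r) * ln T + (1/r) * ln K)"
    using r by (simp add: field_simps)
  finally have A: "?c powr (1 - r) * K = ?X"
    using T K by (simp add: powr_def exp_add)
  have "?c * T = exp (1/r * (ln K - ln T) + ln T)"
    using T K by (simp add: powr_def exp_add ln_div)
  also have "\<dots> = exp ((1 - 1/r) * ln T + (1/r) * ln K)"
    using r by (simp add: field_simps)
  finally have B: "?c * T = ?X"
    using T K by (simp add: powr_def exp_add)
  have "(1/r) * ?c powr (1 - r) * K + (1 - 1/r) * ?c * T = (1/r) * (?c powr (1 - r) * K) + (1 - 1/r) * (?c * T)"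
    by (simp only: mult.assoc)
  also have "\<dots> = ?X"
    unfolding A B by (simp add: algebra_simps)
  finally show ?thesis .
qed

lemma nn_integral_holder:
  fixes w H :: "'a \<Rightarrow> real"
  assumes [measurable]: "w \<in> borel_measurable M" "H \<in> borel_measurable M"
    and wn: "\<And>x. w x \<ge> 0" and Hn: "\<And>x. H x \<ge> 0" and r: "r > 1"
    and T: "(\<integral>\<^sup>+x. ennreal (w x) \<partial>M) = ennreal T" "T \<ge> 0"
    and K: "(\<integral>\<^sup>+x. ennreal (w x * H x powr r) \<partial>M) = ennreal K" "K \<ge> 0"
  shows "(\<integral>\<^sup>+x. ennreal (w x * H x) \<partial>M) \<le> ennreal (T powr (1 - 1/r) * K powr (1/r))"
proof (cases "T = 0 \<or> K = 0")
  case True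
  have "AE x in M. w x * H x = 0"
  proof (cases "T = 0")
    case True
    then have "AE x in M. ennreal (w x) = 0"
      using T by (subst nn_integral_0_iff_AE[symmetric]) auto
    then show ?thesis
      by eventually_elim (use wn in simp)
  next
    case False
    then have "AE x in M. ennreal (w x * H x powr r) = 0"
      using K \<open>T = 0 \<or> K = 0\<close> by (subst nn_integral_0_iff_AE[symmetric]) auto
    then show ?thesis
    proof eventually_elim
      fix x
      assume "ennreal (w x * H x powr r) = 0"
      moreover have "w x * H x powr r \<ge> 0"
        using wn[of x] by simp
      ultimately have "w x * H x powr r = 0"
        by (simp add: ennreal_eq_0_iff)
      then show "w x * H x = 0" by simp
    qed
  qed
  then have "(\<integral>\<^sup>+x. ennreal (w x * H x) \<partial>M) = 0"
    by (subst nn_integral_0_iff_AE) (auto elim!: eventually_mono)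
  then show ?thesis by simp
next
  case False
  then have pos: "T > 0" "K > 0" using T K by auto
  have "(\<integral>\<^sup>+x. ennreal (w x * H x) \<partial>M)
      \<le> ennreal ((1/r) * ((K / T) powr (1/r)) powr (1 - r) * K + (1 - 1/r) * (K / T) powr (1/r) * T)"
    by (rule nn_integral_young_bound[OF assms(1-5) _ T K]) (use pos in simp)
  also have "\<dots> = ennreal (T powr (1 - 1/r) * K powr (1/r))"
    by (simp only: young_optimal_scale[OF pos r])
  finally show ?thesis .
qed

definition tail_cut :: "real \<Rightarrow> real \<Rightarrow> real" where
  "tail_cut x z = (if (\<bar>x\<bar> - 3) / 2 < \<bar>z\<bar> then 1 else 0)"

definition tail_op :: "(real \<Rightarrow> real) \<Rightarrow> (real \<Rightarrow> real) \<Rightarrow> real \<Rightarrow> real" where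
  "tail_op g h x = 2 * (LINT z|lborel. indicator {z. \<bar>z\<bar> > (\<bar>x\<bar> - 3) / 2} z * (g z * h (x - z)))"

definition tail_mass :: "(real \<Rightarrow> real) \<Rightarrow> real \<Rightarrow> ennreal" where
  "tail_mass g x = (\<integral>\<^sup>+z. ennreal (tail_cut x z * g z) \<partial>lborel)"

definition tail_energy :: "(real \<Rightarrow> real) \<Rightarrow> (real \<Rightarrow> real) \<Rightarrow> real \<Rightarrow> real \<Rightarrow> ennreal" where
  "tail_energy g h r x = (\<integral>\<^sup>+z. ennreal (tail_cut x z * g z * \<bar>h (x - z)\<bar> powr r) \<partial>lborel)"

lemma tail_cut_nonneg: "tail_cut x z \<ge> 0"
  by (simp add: tail_cut_def)

lemma tail_cut_measurable [measurable]:
  "(\<lambda>(x, z). tail_cut x z) \<in> borel_measurable (borel \<Otimes>\<^sub>M borel)"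
  "(\<lambda>z. tail_cut x z) \<in> borel_measurable borel"
  unfolding tail_cut_def by measurable

lemma tail_energy_measurable [measurable]:
  assumes [measurable]: "g \<in> borel_measurable borel" "h \<in> borel_measurable borel"
  shows "tail_energy g h r \<in> borel_measurable borel"
  unfolding tail_energy_def by measurable

lemma Phi_tail_op: "Phi f n h = tail_op (fconv f n) h"
  by (simp add: fun_eq_iff Phi_def tail_op_def)

lemma tail_op_measurable:
  assumes [measurable]: "g \<in> borel_measurable borel" "h \<in> borel_measurable borel"
  shows "tail_op g h \<in> borel_measurable borel"
proof -
  have "indicator {z. \<bar>z\<bar> > (\<bar>x\<bar> - 3) / 2} z = tail_cut x z" for x z :: real
    by (simp add: tail_cut_def indicator_def)
  then show ?thesis
    unfolding tail_op_def by simp measurable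
qed

text \<open>Where the cut is active, \<open>|x| < 2|z| + 3\<close>, so the weight at \<open>x\<close> is controlled by
  the weight at \<open>z\<close>.\<close>
lemma tail_cut_weight:
  assumes "s \<ge> 0"
  shows "tail_cut x z * weight s x \<le> 4 powr s * weight s z"
proof (cases "(\<bar>x\<bar> - 3) / 2 < \<bar>z\<bar>")
  case True
  then have "1 + \<bar>x\<bar> \<le> 4 * (1 + \<bar>z\<bar>)"
    by (simp add: field_simps)
  then have "weight s x \<le> (4 * (1 + \<bar>z\<bar>)) powr s"
    using assms by (intro powr_mono2) auto
  also have "\<dots> = 4 powr s * weight s z"
    by (rule powr_mult)
  finally show ?thesis
    using True by (simp add: tail_cut_def)
qed (simp add: tail_cut_def)

lemma tail_mass_decay:
  assumes [measurable]: "g \<in> borel_measurable borel" and gn: "\<And>x. g x \<ge> 0" and eps: "\<epsilon> \<ge> 0"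
  shows "tail_mass g x \<le> ennreal (4 powr \<epsilon> * weight (-\<epsilon>) x) * moment \<epsilon> g"
proof -
  have "tail_mass g x \<le> (\<integral>\<^sup>+z. ennreal (4 powr \<epsilon> * weight (-\<epsilon>) x) * ennreal (g z * weight \<epsilon> z) \<partial>lborel)"
    unfolding tail_mass_def
  proof (rule nn_integral_mono)
    fix z
    have "tail_cut x z = tail_cut x z * weight \<epsilon> x * weight (-\<epsilon>) x"
      by (simp add: powr_minus)
    also have "\<dots> \<le> 4 powr \<epsilon> * weight \<epsilon> z * weight (-\<epsilon>) x"
      by (intro mult_right_mono tail_cut_weight eps) simp
    finally have "tail_cut x z * g z \<le> (4 powr \<epsilon> * weight \<epsilon> z * weight (-\<epsilon>) x) * g z"
      by (rule mult_right_mono) (rule gn)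
    then have "tail_cut x z * g z \<le> (4 powr \<epsilon> * weight (-\<epsilon>) x) * (g z * weight \<epsilon> z)"
      by (simp add: mult_ac)
    then show "ennreal (tail_cut x z * g z) \<le> ennreal (4 powr \<epsilon> * weight (-\<epsilon>) x) * ennreal (g z * weight \<epsilon> z)"
      by (simp add: ennreal_mult'[symmetric] gn ennreal_leI)
  qed
  also have "\<dots> = ennreal (4 powr \<epsilon> * weight (-\<epsilon>) x) * moment \<epsilon> g"
    by (rule nn_integral_cmult) simp
  finally show ?thesis .
qed

text \<open>Integrating the tail energy against a weight of order at most \<open>t\<close> costs the
  \<open>t\<close>-moment of \<open>g\<close> times the \<open>L\<^sup>r\<close> energy of \<open>h\<close> (Tonelli and translation invariance).\<close>
lemma tail_energy_integral:
  assumes [measurable]: "g \<in> borel_measurable borel" "h \<in> borel_measurable borel"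
    and gn: "\<And>x. g x \<ge> 0" and s: "0 \<le> s" "s \<le> t"
  shows "(\<integral>\<^sup>+x. ennreal (weight s x) * tail_energy g h r x \<partial>lborel)
    \<le> ennreal (4 powr s) * moment t g * (\<integral>\<^sup>+y. ennreal (\<bar>h y\<bar> powr r) \<partial>lborel)"
proof -
  let ?H = "\<lambda>y. ennreal (\<bar>h y\<bar> powr r)"
  have "(\<integral>\<^sup>+x. ennreal (weight s x) * tail_energy g h r x \<partial>lborel)
     = (\<integral>\<^sup>+x. (\<integral>\<^sup>+z. ennreal (weight s x) * ennreal (tail_cut x z * g z * \<bar>h (x - z)\<bar> powr r) \<partial>lborel) \<partial>lborel)"
    unfolding tail_energy_def by (intro nn_integral_cong nn_integral_cmult[symmetric]) simp
  also have "\<dots> \<le> (\<integral>\<^sup>+x. (\<integral>\<^sup>+z. ennreal (4 powr s) * ennreal (g z * weight t z) * ?H (x - z) \<partial>lborel) \<partial>lborel)"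
  proof (intro nn_integral_mono)
    fix x z
    have "tail_cut x z * weight s x \<le> 4 powr s * weight t z"
      using tail_cut_weight[OF s(1), of x z] powr_mono[OF s(2), of "1 + \<bar>z\<bar>"]
      by (metis order_trans mult_left_mono powr_ge_zero le_add_same_cancel1 abs_ge_zero)
    from mult_right_mono[OF this, of "g z * \<bar>h (x - z)\<bar> powr r"]
    show "ennreal (weight s x) * ennreal (tail_cut x z * g z * \<bar>h (x - z)\<bar> powr r)
        \<le> ennreal (4 powr s) * ennreal (g z * weight t z) * ?H (x - z)"
      by (simp add: ennreal_mult'[symmetric] ennreal_mult[symmetric] gn tail_cut_nonneg ennreal_leI mult_ac)
  qed
  also have "\<dots> = (\<integral>\<^sup>+z. (\<integral>\<^sup>+x. ennreal (4 powr s) * ennreal (g z * weight t z) * ?H (x - z) \<partial>lborel) \<partial>lborel)"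
    by (rule lborel_pair.Fubini') measurable
  also have "\<dots> = (\<integral>\<^sup>+z. ennreal (4 powr s) * ennreal (g z * weight t z) * (\<integral>\<^sup>+y. ?H y \<partial>lborel) \<partial>lborel)"
    by (simp add: nn_integral_cmult nn_integral_translate[of ?H])
  also have "\<dots> = ennreal (4 powr s) * moment t g * (\<integral>\<^sup>+y. ?H y \<partial>lborel)"
    by (simp add: nn_integral_multc nn_integral_cmult)
  finally show ?thesis .
qed

lemma tail_op_holder:
  assumes [measurable]: "g \<in> borel_measurable borel" "h \<in> borel_measurable borel"
    and gn: "\<And>x. g x \<ge> 0" and r: "r > 1"
    and T: "tail_mass g x = ennreal T" "T \<ge> 0"
    and K: "tail_energy g h r x = ennreal K" "K \<ge> 0"
  shows "\<bar>tail_op g h x\<bar> powr r \<le> 2 powr r * T powr (r - 1) * K"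
proof -
  let ?L = "LINT z|lborel. indicator {z. \<bar>z\<bar> > (\<bar>x\<bar> - 3) / 2} z * (g z * h (x - z))"
  have "ennreal \<bar>?L\<bar> \<le> (\<integral>\<^sup>+z. ennreal \<bar>indicator {z. \<bar>z\<bar> > (\<bar>x\<bar> - 3) / 2} z * (g z * h (x - z))\<bar> \<partial>lborel)"
    by (rule ennreal_abs_integral_le)
  also have "\<dots> = (\<integral>\<^sup>+z. ennreal (tail_cut x z * g z * \<bar>h (x - z)\<bar>) \<partial>lborel)"
    by (intro nn_integral_cong) (simp add: tail_cut_def indicator_def abs_mult gn)
  also have "\<dots> \<le> ennreal (T powr (1 - 1/r) * K powr (1/r))"
    using T K unfolding tail_mass_def tail_energy_def
    by (intro nn_integral_holder r) (auto intro!: mult_nonneg_nonneg tail_cut_nonneg gn)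
  finally have "\<bar>tail_op g h x\<bar> \<le> 2 * (T powr (1 - 1/r) * K powr (1/r))"
    unfolding tail_op_def by (simp add: ennreal_le_iff)
  then have "\<bar>tail_op g h x\<bar> powr r \<le> (2 * (T powr (1 - 1/r) * K powr (1/r))) powr r"
    using r by (intro powr_mono2) auto
  also have "\<dots> = 2 powr r * T powr ((1 - 1/r) * r) * K powr (1/r * r)"
    by (simp only: powr_mult powr_powr)
  also have "\<dots> = 2 powr r * T powr (r - 1) * K"
  proof -
    have "(1 - 1/r) * r = r - 1" "1/r * r = 1"
      using r by (simp_all add: field_simps)
    then show ?thesis
      by (simp only: powr_one[OF K(2)])
  qed
  finally show ?thesis .
qed

text \<open>Combining Hoelder's inequality with the decay of the tail mass: the \<open>r\<close>-th power of the tail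
  operator is dominated by \<open>(1 + |x|)\<^sup>-\<^sup>\<epsilon>\<^sup>(\<^sup>r\<^sup>-\<^sup>1\<^sup>)\<close> times the tail energy.\<close>
lemma tail_op_pointwise:
  assumes [measurable]: "g \<in> borel_measurable borel" "h \<in> borel_measurable borel"
    and gn: "\<And>x. g x \<ge> 0" and eps: "\<epsilon> \<ge> 0" and mg: "moment \<epsilon> g < \<infinity>" and r: "r > 1"
  obtains C where "C > 0"
    "\<And>x. ennreal (\<bar>tail_op g h x\<bar> powr r) \<le> ennreal (C * weight (-\<epsilon> * (r - 1)) x) * tail_energy g h r x"
proof -
  define B where "B = 4 powr \<epsilon> * (enn2real (moment \<epsilon> g) + 1)"
  have B: "B > 0" by (simp add: B_def add_nonneg_pos)
  define C where "C = 2 powr r * B powr (r - 1)"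
  have C: "C > 0" using B by (simp add: C_def)
  have "ennreal (\<bar>tail_op g h x\<bar> powr r) \<le> ennreal (C * weight (-\<epsilon> * (r - 1)) x) * tail_energy g h r x" for x
  proof (cases "tail_energy g h r x = \<infinity>")
    case False
    then obtain K where K: "tail_energy g h r x = ennreal K" "K \<ge> 0"
      by (cases "tail_energy g h r x") auto
    have m: "moment \<epsilon> g \<le> ennreal (enn2real (moment \<epsilon> g) + 1)"
      using mg by (cases "moment \<epsilon> g") auto
    have "tail_mass g x \<le> ennreal (4 powr \<epsilon> * weight (-\<epsilon>) x) * ennreal (enn2real (moment \<epsilon> g) + 1)"
      by (rule order_trans[OF tail_mass_decay[OF assms(1) gn eps, of x] mult_left_mono[OF m]]) simp
    also have "\<dots> = ennreal (B * weight (-\<epsilon>) x)"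
      unfolding B_def by (subst ennreal_mult[symmetric]) (simp_all add: mult_ac)
    finally obtain T where T: "tail_mass g x = ennreal T" "T \<ge> 0" "T \<le> B * weight (-\<epsilon>) x"
      using B by (cases "tail_mass g x") (auto simp: ennreal_le_iff top_unique)
    have "\<bar>tail_op g h x\<bar> powr r \<le> 2 powr r * T powr (r - 1) * K"
      by (rule tail_op_holder[OF assms(1,2) gn r T(1,2) K])
    also have "\<dots> \<le> 2 powr r * (B * weight (-\<epsilon>) x) powr (r - 1) * K"
      using T r K(2) by (intro mult_right_mono mult_left_mono powr_mono2) auto
    also have "\<dots> = C * weight (-\<epsilon> * (r - 1)) x * K"
      by (simp add: C_def powr_mult powr_powr)
    finally show ?thesis
      using C K by (simp add: ennreal_mult'[symmetric] ennreal_leI)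
  qed (use C in \<open>simp add: ennreal_mult_top\<close>)
  with C that show ?thesis by blast
qed

lemma Lp_of_Linf_Lq:
  fixes h :: "'a \<Rightarrow> real"
  assumes [measurable]: "h \<in> borel_measurable M"
    and bound: "AE x in M. \<bar>h x\<bar> \<le> B" and hq: "(\<integral>\<^sup>+x. ennreal (\<bar>h x\<bar> powr q) \<partial>M) < \<infinity>"
    and qp: "q \<le> p"
  shows "(\<integral>\<^sup>+x. ennreal (\<bar>h x\<bar> powr p) \<partial>M) < \<infinity>"
proof -
  define B' where "B' = max B 0"
  have "(\<integral>\<^sup>+x. ennreal (\<bar>h x\<bar> powr p) \<partial>M) \<le> (\<integral>\<^sup>+x. ennreal (B' powr (p - q)) * ennreal (\<bar>h x\<bar> powr q) \<partial>M)"
  proof (rule nn_integral_mono_AE)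
    show "AE x in M. ennreal (\<bar>h x\<bar> powr p) \<le> ennreal (B' powr (p - q)) * ennreal (\<bar>h x\<bar> powr q)"
      using bound
    proof eventually_elim
      fix x
      assume hx: "\<bar>h x\<bar> \<le> B"
      have "\<bar>h x\<bar> powr p \<le> B' powr (p - q) * \<bar>h x\<bar> powr q"
      proof (cases "h x = 0")
        case False
        then have "\<bar>h x\<bar> powr p = \<bar>h x\<bar> powr (p - q) * \<bar>h x\<bar> powr q"
          by (simp add: powr_add[symmetric])
        also have "\<dots> \<le> B' powr (p - q) * \<bar>h x\<bar> powr q"
          using hx qp by (intro mult_right_mono powr_mono2) (auto simp: B'_def)
        finally show ?thesis .
      qed simp
      then show "ennreal (\<bar>h x\<bar> powr p) \<le> ennreal (B' powr (p - q)) * ennreal (\<bar>h x\<bar> powr q)"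
        by (simp add: ennreal_mult[symmetric] ennreal_leI)
    qed
  qed
  also have "\<dots> = ennreal (B' powr (p - q)) * (\<integral>\<^sup>+x. ennreal (\<bar>h x\<bar> powr q) \<partial>M)"
    by (rule nn_integral_cmult) simp
  also have "\<dots> < \<infinity>"
    using hq by (simp add: ennreal_mult_less_top)
  finally show ?thesis .
qed

text \<open>Interpolation between a higher power with a growing weight and a decaying weight:
  for \<open>0 < p < q\<close>, \<open>P\<^sup>p \<le> P\<^sup>q v\<^sup>\<epsilon>\<^sup>q + v\<^sup>-\<^sup>\<gamma>\<close> with \<open>\<gamma> = \<epsilon>qp/(q-p)\<close> (weighted Young inequality).\<close>
lemma powr_interpolation:
  fixes P v \<epsilon> p q :: real
  assumes P: "P \<ge> 0" and v: "v > 0" and pq: "0 < p" "p < q"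
  shows "P powr p \<le> P powr q * v powr (\<epsilon> * q) + v powr (-(\<epsilon> * q * p / (q - p)))"
proof (cases "P = 0")
  case False
  define a where "a = P powr q * v powr (\<epsilon> * q)"
  define b where "b = v powr (-(\<epsilon> * q * p / (q - p)))"
  have ab: "a > 0" "b > 0"
    using False P v by (simp_all add: a_def b_def)
  have "a powr (p/q) * b powr (1 - p/q) \<le> (p/q) * a + (1 - p/q) * b"
    by (rule Youngs_inequality_0) (use pq ab in auto)
  also have "\<dots> \<le> a + b"
  proof -
    have "p/q \<le> 1" "0 \<le> p/q" using pq by auto
    then have "(p/q) * a \<le> a" "(1 - p/q) * b \<le> b"
      using ab by (simp_all only: mult_left_le_one_le less_imp_le diff_le_self diff_ge_0_iff_ge)
    then show ?thesis by linarith
  qed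
  also have "a powr (p/q) * b powr (1 - p/q) = P powr p"
  proof -
    have "-(\<epsilon> * q * p / (q - p)) * (1 - p/q) = -(\<epsilon> * p)"
      using pq by (simp add: field_simps)
    then show ?thesis
      using P v pq unfolding a_def b_def by (simp add: powr_mult powr_powr powr_add[symmetric])
  qed
  finally show ?thesis
    by (simp add: a_def b_def)
qed (use pq in simp)

lemma interpolation_exponent_gt_one:
  fixes p q \<epsilon> :: real
  assumes "(1 - \<epsilon>) * q < p" "1 \<le> p" "p < q" "\<epsilon> > 0"
  shows "\<epsilon> * q * p / (q - p) > 1"
proof -
  have "q - p < \<epsilon> * q" using assms(1) by (simp add: algebra_simps)
  also have "\<dots> \<le> \<epsilon> * q * p" using assms mult_left_mono[of 1 p "\<epsilon> * q"] by simp
  finally show ?thesis using assms by (simp add: field_simps)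
qed

text \<open>Case \<open>p \<ge> q\<close>: here \<open>h \<in> L\<^sup>p\<close>, and the pointwise bound with \<open>r = p\<close> suffices.\<close>
lemma tail_op_Lp_large:
  assumes [measurable]: "g \<in> borel_measurable borel" "h \<in> borel_measurable borel"
    and gn: "\<And>x. g x \<ge> 0" and eps: "\<epsilon> \<ge> 0" and mg: "moment \<epsilon> g < \<infinity>"
    and bound: "AE x in lborel. \<bar>h x\<bar> \<le> M" and hq: "(\<integral>\<^sup>+x. ennreal (\<bar>h x\<bar> powr q) \<partial>lborel) < \<infinity>"
    and q: "1 < q" "q \<le> p"
  shows "(\<integral>\<^sup>+x. ennreal (\<bar>tail_op g h x\<bar> powr p) \<partial>lborel) < \<infinity>"
proof -
  obtain C where C: "C > 0"
    and pt: "\<And>x. ennreal (\<bar>tail_op g h x\<bar> powr p) \<le> ennreal (C * weight (-\<epsilon> * (p - 1)) x) * tail_energy g h p x"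
    using tail_op_pointwise[OF assms(1,2) gn eps mg, of p] q by auto
  have "(\<integral>\<^sup>+x. ennreal (\<bar>tail_op g h x\<bar> powr p) \<partial>lborel)
      \<le> (\<integral>\<^sup>+x. ennreal C * (ennreal (weight 0 x) * tail_energy g h p x) \<partial>lborel)"
  proof (rule nn_integral_mono)
    fix x
    have "ennreal (C * weight (-\<epsilon> * (p - 1)) x) \<le> ennreal C"
      using weight_le_one[of "-\<epsilon> * (p - 1)" x] eps q C by (intro ennreal_leI mult_left_le) auto
    then have "ennreal (C * weight (-\<epsilon> * (p - 1)) x) * tail_energy g h p x \<le> ennreal C * tail_energy g h p x"
      by (rule mult_right_mono) simp
    also have "\<dots> = ennreal C * (ennreal (weight 0 x) * tail_energy g h p x)"
      by (simp add: weight_zero)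
    finally show "ennreal (\<bar>tail_op g h x\<bar> powr p) \<le> ennreal C * (ennreal (weight 0 x) * tail_energy g h p x)"
      using pt[of x] by (rule order_trans[rotated])
  qed
  also have "\<dots> = ennreal C * (\<integral>\<^sup>+x. ennreal (weight 0 x) * tail_energy g h p x \<partial>lborel)"
    by (rule nn_integral_cmult) simp
  also have "\<dots> \<le> ennreal C * (ennreal (4 powr 0) * moment \<epsilon> g * (\<integral>\<^sup>+y. ennreal (\<bar>h y\<bar> powr p) \<partial>lborel))"
    by (intro mult_left_mono tail_energy_integral gn eps) auto
  also have "\<dots> < \<infinity>"
    using mg Lp_of_Linf_Lq[OF _ bound hq q(2)] by (simp add: ennreal_mult_less_top)
  finally show ?thesis .
qed

text \<open>For \<open>p < q\<close>, interpolating between the pointwise bound with \<open>r = q\<close> and the weight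
  \<open>(1 + |x|)\<^sup>-\<^sup>\<gamma>\<close>: the growing factor \<open>(1 + |x|)\<^sup>\<epsilon>\<^sup>q\<close> is absorbed by the decay of the tail mass,
  leaving only \<open>(1 + |x|)\<^sup>\<epsilon>\<close> in front of the tail energy.\<close>
lemma tail_op_interpolated:
  assumes [measurable]: "g \<in> borel_measurable borel" "h \<in> borel_measurable borel"
    and gn: "\<And>x. g x \<ge> 0" and eps: "\<epsilon> > 0" and mg: "moment \<epsilon> g < \<infinity>"
    and p: "1 \<le> p" "p < q"
  obtains C where "C > 0" "\<And>x. ennreal (\<bar>tail_op g h x\<bar> powr p)
    \<le> ennreal C * (ennreal (weight \<epsilon> x) * tail_energy g h q x) + ennreal (weight (-(\<epsilon> * q * p / (q - p))) x)"
proof -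
  obtain C where C: "C > 0"
    and pt: "\<And>x. ennreal (\<bar>tail_op g h x\<bar> powr q) \<le> ennreal (C * weight (-\<epsilon> * (q - 1)) x) * tail_energy g h q x"
    using tail_op_pointwise[of g h \<epsilon> q] assms by auto
  have "ennreal (\<bar>tail_op g h x\<bar> powr p)
    \<le> ennreal C * (ennreal (weight \<epsilon> x) * tail_energy g h q x) + ennreal (weight (-(\<epsilon> * q * p / (q - p))) x)"
    (is "_ \<le> ?bound") for x
  proof -
    let ?P = "\<bar>tail_op g h x\<bar>" and ?w = "\<lambda>s. ennreal (weight s x)"
    have w: "ennreal (C * weight (-\<epsilon> * (q - 1)) x) * ?w (\<epsilon> * q) = ennreal C * ?w \<epsilon>"
      using C by (simp add: ennreal_mult[symmetric] mult.assoc weight_add algebra_simps)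
    have "ennreal (?P powr p) \<le> ennreal (?P powr q * weight (\<epsilon> * q) x + weight (-(\<epsilon> * q * p / (q - p))) x)"
      using p by (intro ennreal_leI powr_interpolation) auto
    also have "\<dots> = ennreal (?P powr q) * ?w (\<epsilon> * q) + ?w (-(\<epsilon> * q * p / (q - p)))"
      by (simp add: ennreal_plus ennreal_mult)
    also have "\<dots> \<le> ennreal (C * weight (-\<epsilon> * (q - 1)) x) * tail_energy g h q x * ?w (\<epsilon> * q)
        + ?w (-(\<epsilon> * q * p / (q - p)))"
      by (intro add_right_mono mult_right_mono pt) simp
    also have "\<dots> = ?bound"
      using w by (simp add: mult_ac)
    finally show ?thesis .
  qed
  with C that show ?thesis by blast
qed

lemma tail_op_Lp_small:
  assumes [measurable]: "g \<in> borel_measurable borel" "h \<in> borel_measurable borel"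
    and gn: "\<And>x. g x \<ge> 0" and eps: "\<epsilon> > 0" and mg: "moment \<epsilon> g < \<infinity>"
    and hq: "(\<integral>\<^sup>+x. ennreal (\<bar>h x\<bar> powr q) \<partial>lborel) < \<infinity>"
    and p: "(1 - \<epsilon>) * q < p" "1 \<le> p" "p < q"
  shows "(\<integral>\<^sup>+x. ennreal (\<bar>tail_op g h x\<bar> powr p) \<partial>lborel) < \<infinity>"
proof -
  define \<gamma> where "\<gamma> = \<epsilon> * q * p / (q - p)"
  obtain C where pt: "\<And>x. ennreal (\<bar>tail_op g h x\<bar> powr p)
      \<le> ennreal C * (ennreal (weight \<epsilon> x) * tail_energy g h q x) + ennreal (weight (-\<gamma>) x)"
    unfolding \<gamma>_def using tail_op_interpolated[OF assms(1-5) p(2,3)] by blast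
  have "(\<integral>\<^sup>+x. ennreal (weight \<epsilon> x) * tail_energy g h q x \<partial>lborel)
      \<le> ennreal (4 powr \<epsilon>) * moment \<epsilon> g * (\<integral>\<^sup>+y. ennreal (\<bar>h y\<bar> powr q) \<partial>lborel)"
    using eps by (intro tail_energy_integral gn) auto
  also have "\<dots> < \<infinity>"
    using mg hq by (simp add: ennreal_mult_less_top)
  finally have energy: "(\<integral>\<^sup>+x. ennreal (weight \<epsilon> x) * tail_energy g h q x \<partial>lborel) < \<infinity>" .
  have decay: "(\<integral>\<^sup>+x. ennreal (weight (-\<gamma>) x) \<partial>lborel) < \<infinity>"
    unfolding \<gamma>_def by (intro weight_integrable interpolation_exponent_gt_one p eps)
  have "(\<integral>\<^sup>+x. ennreal (\<bar>tail_op g h x\<bar> powr p) \<partial>lborel)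
      \<le> (\<integral>\<^sup>+x. ennreal C * (ennreal (weight \<epsilon> x) * tail_energy g h q x) + ennreal (weight (-\<gamma>) x) \<partial>lborel)"
    by (intro nn_integral_mono pt)
  also have "\<dots> = ennreal C * (\<integral>\<^sup>+x. ennreal (weight \<epsilon> x) * tail_energy g h q x \<partial>lborel)
      + (\<integral>\<^sup>+x. ennreal (weight (-\<gamma>) x) \<partial>lborel)"
    by (simp add: nn_integral_add nn_integral_cmult)
  also have "\<dots> < \<infinity>"
    using energy decay by (simp add: ennreal_mult_less_top)
  finally show ?thesis .
qed

lemma tail_op_Lp:
  assumes [measurable]: "g \<in> borel_measurable borel" "h \<in> borel_measurable borel"
    and gn: "\<And>x. g x \<ge> 0" and eps: "\<epsilon> > 0" and mg: "moment \<epsilon> g < \<infinity>"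
    and bound: "AE x in lborel. \<bar>h x\<bar> \<le> M" and hq: "(\<integral>\<^sup>+x. ennreal (\<bar>h x\<bar> powr q) \<partial>lborel) < \<infinity>"
    and q: "1 < q" and p: "(1 - \<epsilon>) * q < p" "1 \<le> p"
  shows "integrable lborel (\<lambda>x. \<bar>tail_op g h x\<bar> powr p)"
proof -
  have [measurable]: "tail_op g h \<in> borel_measurable borel"
    by (rule tail_op_measurable) measurable
  have "(\<integral>\<^sup>+x. ennreal (\<bar>tail_op g h x\<bar> powr p) \<partial>lborel) < \<infinity>"
  proof (cases "q \<le> p")
    case True
    then show ?thesis using tail_op_Lp_large[OF assms(1-3) _ mg bound hq q] eps by simp
  next
    case False
    then show ?thesis using tail_op_Lp_small[OF assms(1-5) hq p] by simp
  qed
  then show ?thesis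
    by (simp add: integrable_iff_bounded)
qed

theorem lemma3p4:
  fixes f h :: "real \<Rightarrow> real" and \<epsilon> q :: real
  assumes f_meas: "f \<in> borel_measurable lborel"
    and f_nonneg: "\<And>x. f x \<ge> 0"
    and f_bdd: "\<exists>C. \<forall>x. f x \<le> C"
    and f_int: "integrable lborel f"
    and f_prob: "(LINT x|lborel. f x) = 1"
    and eps_pos: "\<epsilon> > 0"
    and f_moment: "integrable lborel (\<lambda>x. \<bar>x\<bar> powr \<epsilon> * f x)"
    and h_meas: "h \<in> borel_measurable lborel"
    and h_Linf: "\<exists>C. AE x in lborel. \<bar>h x\<bar> \<le> C"
    and q_gt: "1 < q"
    and h_Lq: "integrable lborel (\<lambda>x. \<bar>h x\<bar> powr q)"
  shows "\<forall>p n. (1 - \<epsilon>) * q < p \<and> 1 \<le> p \<and> n \<ge> 1 \<longrightarrow>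
           Phi f n h \<in> borel_measurable lborel \<and>
           integrable lborel (\<lambda>x. \<bar>Phi f n h x\<bar> powr p)"
proof (intro allI impI, elim conjE)
  fix p :: real and n :: nat
  assume p: "(1 - \<epsilon>) * q < p" "1 \<le> p"
  have [measurable]: "f \<in> borel_measurable borel" "h \<in> borel_measurable borel"
    using f_meas h_meas by simp_all
  have "moment \<epsilon> f < \<infinity>"
    using moment_finite f_nonneg eps_pos f_int f_moment by simp
  then have [measurable]: "fconv f n \<in> borel_measurable borel"
    and g: "\<And>x. fconv f n x \<ge> 0" "moment \<epsilon> (fconv f n) < \<infinity>"
    using fconv_moment[of f \<epsilon> n] f_nonneg eps_pos by auto
  obtain M where M: "AE x in lborel. \<bar>h x\<bar> \<le> M"
    using h_Linf by blast
  have hq: "(\<integral>\<^sup>+x. ennreal (\<bar>h x\<bar> powr q) \<partial>lborel) < \<infinity>"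
    using h_Lq by (simp add: integrable_iff_bounded)
  show "Phi f n h \<in> borel_measurable lborel \<and> integrable lborel (\<lambda>x. \<bar>Phi f n h x\<bar> powr p)"
    unfolding Phi_tail_op using tail_op_measurable tail_op_Lp[OF _ _ g(1) eps_pos g(2) M hq q_gt p] by simp
qed

end
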